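(* For $a>0$ and $m>0$, $$\int_{0}^{1}\frac{\tanh^{-1}(x^m)}{x\left(a^2+\log^2 x\right)}\,dx=\frac{\pi}{4a}\log\!\left(\frac{am\,\Gamma\!\left(\frac{am}{2\pi}\right)^2}{2\pi\,\Gamma\!\left(\frac{am+\pi}{2\pi}\right)^2}\right).$$ *)

theory Defs
  imports "HOL-Analysis.Analysis"
begin

end

(*
  Substituting x = exp (-t) turns the integral into the integral over t > 0 of
  artanh (exp (-m t)) / (a^2 + t^2).  Expanding artanh into its power series and rescaling
  the n-th term gives (m/a) exp (-a v) / (M_n^2 + v^2) with M_n = m (2n+1).
  Since exp (-a u) (a/u + 1/u^2) = - d/du (exp (-a u) / u), an integration by parts
  (done with Tonelli) replaces the factor v / (M_n^2 + v^2) by its primitive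
  (1/2) ln (1 + u^2 / M_n^2); by the product formula for cosh these primitives sum to
  (1/2) ln cosh (pi u / (2 m)), and undoing the integration by parts leaves
  (pi / (4 a)) times the integral of tanh (pi v / (2 m)) exp (-a v) / v.
  Expanding tanh as a geometric series in exp (-pi v / m) yields Frullani-type integrals
  2 ln (p + q) - ln p - ln (p + 2 q), which sum to the logarithm of the Gamma ratio by the
  Gauss product for Gamma.  Everything is nonnegative, so all interchanges of sums and
  integrals are instances of monotone convergence.
*)

theory Submission
  imports Defs "HOL-Real_Asymp.Real_Asymp"
begin

section \<open>Nonnegative integrals on intervals\<close>

lemma nn_integral_einterval_FTC_nonneg:
  fixes f F :: "real \<Rightarrow> real" and a b :: ereal
  assumes "a < b"
    and F: "\<And>x. a < ereal x \<Longrightarrow> ereal x < b \<Longrightarrow> DERIV F x :> f x"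
    and f: "\<And>x. a < ereal x \<Longrightarrow> ereal x < b \<Longrightarrow> isCont f x"
    and f_nonneg: "\<And>x. a < ereal x \<Longrightarrow> ereal x < b \<Longrightarrow> 0 \<le> f x"
    and A: "((F \<circ> real_of_ereal) \<longlongrightarrow> A) (at_right a)"
    and B: "((F \<circ> real_of_ereal) \<longlongrightarrow> B) (at_left b)"
  shows "(\<integral>\<^sup>+x. ennreal (indicator (einterval a b) x * f x) \<partial>lborel) = ennreal (B - A)"
proof -
  have "AE x in lborel. a < ereal x \<longrightarrow> ereal x < b \<longrightarrow> 0 \<le> f x"
    using f_nonneg by auto
  note FTC = interval_integral_FTC_nonneg[OF \<open>a < b\<close> F f this A B]
  have "integrable lborel (\<lambda>x. indicator (einterval a b) x * f x)"
    using FTC(1) unfolding set_integrable_def by simp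
  then have "(\<integral>\<^sup>+x. ennreal (indicator (einterval a b) x * f x) \<partial>lborel)
        = ennreal (\<integral>x. indicator (einterval a b) x * f x \<partial>lborel)"
    by (rule nn_integral_eq_integral) (auto simp: indicator_def einterval_def f_nonneg)
  also have "(\<integral>x. indicator (einterval a b) x * f x \<partial>lborel) = (LBINT x=a..b. f x)"
    using \<open>a < b\<close> by (simp add: interval_lebesgue_integral_def set_lebesgue_integral_def)
  finally show ?thesis
    using FTC(2) by simp
qed

lemma nn_integral_Ioi_FTC_nonneg:
  fixes f F :: "real \<Rightarrow> real"
  assumes "\<And>x. p < x \<Longrightarrow> DERIV F x :> f x" "\<And>x. p < x \<Longrightarrow> isCont f x"
    and "\<And>x. p < x \<Longrightarrow> 0 \<le> f x"
    and "(F \<longlongrightarrow> A) (at_right p)" "(F \<longlongrightarrow> B) at_top"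
  shows "(\<integral>\<^sup>+x. ennreal (indicator {p<..} x * f x) \<partial>lborel) = ennreal (B - A)"
proof -
  have "einterval (ereal p) \<infinity> = {p<..}"
    by (auto simp: einterval_def)
  moreover have "(\<integral>\<^sup>+x. ennreal (indicator (einterval (ereal p) \<infinity>) x * f x) \<partial>lborel) = ennreal (B - A)"
    by (rule nn_integral_einterval_FTC_nonneg) (use assms in \<open>auto simp: ereal_tendsto_simps\<close>)
  ultimately show ?thesis
    by simp
qed

lemma nn_integral_Ioo_FTC_nonneg:
  fixes f F :: "real \<Rightarrow> real"
  assumes "p < q"
    and "\<And>x. p < x \<Longrightarrow> x < q \<Longrightarrow> DERIV F x :> f x" "\<And>x. p < x \<Longrightarrow> x < q \<Longrightarrow> isCont f x"
    and "\<And>x. p < x \<Longrightarrow> x < q \<Longrightarrow> 0 \<le> f x"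
    and "(F \<longlongrightarrow> A) (at_right p)" "(F \<longlongrightarrow> B) (at_left q)"
  shows "(\<integral>\<^sup>+x. ennreal (indicator {p<..<q} x * f x) \<partial>lborel) = ennreal (B - A)"
proof -
  have "einterval (ereal p) (ereal q) = {p<..<q}"
    by (auto simp: einterval_def)
  moreover have "(\<integral>\<^sup>+x. ennreal (indicator (einterval (ereal p) (ereal q)) x * f x) \<partial>lborel) = ennreal (B - A)"
    by (rule nn_integral_einterval_FTC_nonneg) (use assms in \<open>auto simp: ereal_tendsto_simps\<close>)
  ultimately show ?thesis
    by simp
qed

lemma nn_integral_indicator_incseq_tendsto:
  fixes f :: "real \<Rightarrow> real" and A :: "nat \<Rightarrow> real set"
  assumes [measurable]: "f \<in> borel_measurable borel" "\<And>i. A i \<in> sets borel"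
    and "incseq A" and "\<And>x. 0 \<le> f x"
  shows "(\<lambda>i. \<integral>\<^sup>+x. ennreal (f x * indicator (A i) x) \<partial>lborel)
           \<longlonglongrightarrow> (\<integral>\<^sup>+x. ennreal (f x * indicator (\<Union>i. A i) x) \<partial>lborel)"
proof (rule nn_integral_LIMSEQ)
  show "incseq (\<lambda>i x. ennreal (f x * indicator (A i) x))"
    using assms(3,4)
    by (intro incseq_SucI le_funI ennreal_leI mult_left_mono) (auto simp: incseq_Suc_iff indicator_def)
  show "(\<lambda>i. ennreal (f x * indicator (A i) x)) \<longlonglongrightarrow> ennreal (f x * indicator (\<Union>i. A i) x)" for x
    by (intro tendsto_ennrealI tendsto_mult_left LIMSEQ_indicator_incseq \<open>incseq A\<close>)
qed measurable

lemma UN_exp_neg_atLeastAtMost: "(\<Union>n. {exp (- real n)..1}) = {0<..1::real}"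
proof (intro equalityI subsetI)
  fix x :: real assume x: "x \<in> {0<..1}"
  then have "- real (nat \<lceil>- ln x\<rceil>) \<le> ln x"
    by linarith
  then have "exp (- real (nat \<lceil>- ln x\<rceil>)) \<le> x"
    using x by (simp add: ln_ge_iff)
  with x have "x \<in> {exp (- real (nat \<lceil>- ln x\<rceil>))..1}"
    by simp
  then show "x \<in> (\<Union>n. {exp (- real n)..1})"
    by blast
qed (auto intro: less_le_trans[OF exp_gt_zero])

lemma nn_integral_Ioo01_exp_subst:
  fixes f :: "real \<Rightarrow> real"
  assumes [measurable]: "f \<in> borel_measurable borel" and nonneg: "\<And>x. 0 \<le> f x"
  shows "(\<integral>\<^sup>+x. ennreal (indicator {0<..<1} x * f x) \<partial>lborel) =
         (\<integral>\<^sup>+t. ennreal (indicator {0<..} t * (f (exp (-t)) * exp (-t))) \<partial>lborel)"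
proof -
  define g where "g t = f (exp (-t)) * exp (-t)" for t
  have [measurable]: "g \<in> borel_measurable borel"
    unfolding g_def by measurable
  have truncated: "(\<integral>\<^sup>+x. ennreal (f x * indicator {exp (- real n)..1} x) \<partial>lborel)
      = (\<integral>\<^sup>+t. ennreal (g t * indicator {0..real n} t) \<partial>lborel)" for n
  proof -
    have "(\<integral>\<^sup>+x. ennreal (f x * indicator {exp (- real n)..1} x) \<partial>lborel)
        = (\<integral>\<^sup>+x. ennreal (f (exp x) * exp x * indicator {- real n..0} x) \<partial>lborel)"
      by (rule nn_integral_substitution[of exp "- real n" 0 f exp, simplified])
         (auto simp: set_borel_measurable_def intro!: DERIV_exp continuous_intros)
    also have "\<dots> = ennreal \<bar>-1\<bar> * (\<integral>\<^sup>+x. ennreal (f (exp (0 + (-1) * x)) * exp (0 + (-1) * x)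
                      * indicator {- real n..0} (0 + (-1) * x)) \<partial>lborel)"
      by (rule nn_integral_real_affine) auto
    finally show ?thesis
      by (simp add: g_def indicator_def conj_commute)
  qed
  have lim_left: "(\<lambda>n. \<integral>\<^sup>+x. ennreal (f x * indicator {exp (- real n)..1} x) \<partial>lborel)
      \<longlonglongrightarrow> (\<integral>\<^sup>+x. ennreal (f x * indicator {0<..1} x) \<partial>lborel)"
    using nn_integral_indicator_incseq_tendsto[of f "\<lambda>n. {exp (- real n)..1}"] nonneg
      UN_exp_neg_atLeastAtMost
    by (auto simp: incseq_def)
  have "(\<Union>n. {0..real n}) = {0::real..}"
    by (auto intro: real_arch_simple)
  then have lim_right: "(\<lambda>n. \<integral>\<^sup>+t. ennreal (g t * indicator {0..real n} t) \<partial>lborel)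
      \<longlonglongrightarrow> (\<integral>\<^sup>+t. ennreal (g t * indicator {0..} t) \<partial>lborel)"
    using nn_integral_indicator_incseq_tendsto[of g "\<lambda>n. {0..real n}"] nonneg
    by (auto simp: incseq_def g_def)
  have "(\<integral>\<^sup>+x. ennreal (f x * indicator {0<..1} x) \<partial>lborel)
      = (\<integral>\<^sup>+t. ennreal (g t * indicator {0..} t) \<partial>lborel)"
    using LIMSEQ_unique[OF lim_left] lim_right truncated by simp
  moreover have "(\<integral>\<^sup>+x. ennreal (f x * indicator {0<..1} x) \<partial>lborel)
      = (\<integral>\<^sup>+x. ennreal (indicator {0<..<1} x * f x) \<partial>lborel)"
    by (intro nn_integral_cong_AE eventually_mono[OF AE_lborel_singleton[of 1]]) (auto simp: indicator_def)
  moreover have "(\<integral>\<^sup>+t. ennreal (g t * indicator {0..} t) \<partial>lborel)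
      = (\<integral>\<^sup>+t. ennreal (indicator {0<..} t * g t) \<partial>lborel)"
    by (intro nn_integral_cong_AE eventually_mono[OF AE_lborel_singleton[of 0]]) (auto simp: indicator_def)
  ultimately show ?thesis
    by (simp add: g_def)
qed

lemma nn_integral_Ioi_sums:
  fixes f :: "nat \<Rightarrow> real \<Rightarrow> real"
  assumes [measurable]: "\<And>i. f i \<in> borel_measurable borel"
    and nonneg: "\<And>i t. t > 0 \<Longrightarrow> 0 \<le> f i t"
    and sums: "\<And>t. t > 0 \<Longrightarrow> (\<lambda>i. f i t) sums S t"
  shows "(\<integral>\<^sup>+t. ennreal (indicator {0<..} t * S t) \<partial>lborel)
         = (\<Sum>i. \<integral>\<^sup>+t. ennreal (indicator {0<..} t * f i t) \<partial>lborel)"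
proof -
  have "ennreal (indicator {0<..} t * S t) = (\<Sum>i. ennreal (indicator {0<..} t * f i t))" for t
  proof (cases "t > 0")
    case True
    have "(\<Sum>i. ennreal (f i t)) = ennreal (S t)"
      using True nonneg sums by (intro suminf_ennreal_eq) auto
    with True show ?thesis
      by simp
  qed (simp add: indicator_def)
  then have "(\<integral>\<^sup>+t. ennreal (indicator {0<..} t * S t) \<partial>lborel)
        = (\<integral>\<^sup>+t. (\<Sum>i. ennreal (indicator {0<..} t * f i t)) \<partial>lborel)"
    by simp
  also have "\<dots> = (\<Sum>i. \<integral>\<^sup>+t. ennreal (indicator {0<..} t * f i t) \<partial>lborel)"
    by (rule nn_integral_suminf) measurable
  finally show ?thesis .
qed

lemma nn_integral_Ioi_rescale:
  fixes h :: "real \<Rightarrow> real"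
  assumes "c > 0" and [measurable]: "h \<in> borel_measurable borel"
  shows "(\<integral>\<^sup>+t. ennreal (indicator {0<..} t * h t) \<partial>lborel)
         = (\<integral>\<^sup>+u. ennreal (indicator {0<..} u * (c * h (c * u))) \<partial>lborel)"
proof -
  have "(\<integral>\<^sup>+t. ennreal (indicator {0<..} t * h t) \<partial>lborel)
        = ennreal \<bar>c\<bar> * (\<integral>\<^sup>+u. ennreal (indicator {0<..} (0 + c * u) * h (0 + c * u)) \<partial>lborel)"
    by (rule nn_integral_real_affine) (use \<open>c > 0\<close> in auto)
  also have "\<dots> = (\<integral>\<^sup>+u. ennreal c * ennreal (indicator {0<..} u * h (c * u)) \<partial>lborel)"
    using \<open>c > 0\<close> by (subst nn_integral_cmult) (auto simp: indicator_def zero_less_mult_iff)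
  also have "\<dots> = (\<integral>\<^sup>+u. ennreal (indicator {0<..} u * (c * h (c * u))) \<partial>lborel)"
    using \<open>c > 0\<close> by (intro nn_integral_cong) (auto simp: ennreal_mult'[symmetric] indicator_def)
  finally show ?thesis .
qed

lemma nn_integral_Ioi_cmult:
  fixes h :: "real \<Rightarrow> real"
  assumes "k \<ge> 0" and [measurable]: "h \<in> borel_measurable borel"
  shows "(\<integral>\<^sup>+t. ennreal (indicator {0<..} t * (k * h t)) \<partial>lborel)
         = ennreal k * (\<integral>\<^sup>+t. ennreal (indicator {0<..} t * h t) \<partial>lborel)"
proof -
  have "(\<integral>\<^sup>+t. ennreal (indicator {0<..} t * (k * h t)) \<partial>lborel)
        = (\<integral>\<^sup>+t. ennreal k * ennreal (indicator {0<..} t * h t) \<partial>lborel)"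
    using \<open>k \<ge> 0\<close> by (intro nn_integral_cong) (auto simp: ennreal_mult'[symmetric] indicator_def)
  also have "\<dots> = ennreal k * (\<integral>\<^sup>+t. ennreal (indicator {0<..} t * h t) \<partial>lborel)"
    by (rule nn_integral_cmult) measurable
  finally show ?thesis .
qed

section \<open>Integration by parts on the half-line\<close>

lemma nn_integral_Ioi_exp_div_kernel:
  assumes "a > 0" "v > 0"
  shows "(\<integral>\<^sup>+u. ennreal (indicator {v<..} u * (exp (- a * u) * (a / u + 1 / u\<^sup>2))) \<partial>lborel)
         = ennreal (exp (- a * v) / v)"
proof -
  have "(\<integral>\<^sup>+u. ennreal (indicator {v<..} u * (exp (- a * u) * (a / u + 1 / u\<^sup>2))) \<partial>lborel)
        = ennreal (0 - (- exp (- a * v) / v))"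
  proof (rule nn_integral_Ioi_FTC_nonneg)
    fix x assume "v < x"
    with assms have "x > 0"
      by simp
    then show "DERIV (\<lambda>u. - exp (- a * u) / u) x :> exp (- a * x) * (a / x + 1 / x\<^sup>2)"
      by (auto intro!: derivative_eq_intros simp: field_simps power2_eq_square)
    show "isCont (\<lambda>u. exp (- a * u) * (a / u + 1 / u\<^sup>2)) x"
      using \<open>x > 0\<close> by (auto intro!: continuous_intros)
    show "0 \<le> exp (- a * x) * (a / x + 1 / x\<^sup>2)"
      using \<open>x > 0\<close> \<open>a > 0\<close> by simp
  next
    show "((\<lambda>u. - exp (- a * u) / u) \<longlongrightarrow> - exp (- a * v) / v) (at_right v)"
      using \<open>v > 0\<close> by (auto intro!: tendsto_eq_intros)
    show "((\<lambda>u. - exp (- a * u) / u) \<longlongrightarrow> 0) at_top"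
      using \<open>a > 0\<close> by real_asymp
  qed
  then show ?thesis
    by simp
qed

lemma nn_integral_Ioo_primitive:
  fixes g G :: "real \<Rightarrow> real"
  assumes "u > 0" and [measurable]: "g \<in> borel_measurable borel"
    and nonneg: "\<And>v. 0 \<le> v \<Longrightarrow> 0 \<le> g v"
    and deriv: "\<And>v. (G has_real_derivative g v) (at v)" and "G 0 = 0"
  shows "(\<integral>\<^sup>+v. ennreal (indicator {0<..<u} v * g v) \<partial>lborel) = ennreal (G u)" "0 \<le> G u"
proof -
  have "(g has_integral G u - G 0) {0..u}"
    using \<open>u > 0\<close> deriv
    by (intro fundamental_theorem_of_calculus)
       (auto simp: has_real_derivative_iff_has_vector_derivative intro: has_vector_derivative_at_within)
  then have G_integral: "(g has_integral G u) {0<..<u}"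
    by (simp add: \<open>G 0 = 0\<close> has_integral_Icc_iff_Ioo)
  show "(\<integral>\<^sup>+v. ennreal (indicator {0<..<u} v * g v) \<partial>lborel) = ennreal (G u)"
    using nn_integral_has_integral_lebesgue[OF _ G_integral] nonneg by simp
  show "0 \<le> G u"
    using has_integral_nonneg[OF G_integral] nonneg by simp
qed

lemma nn_integral_exp_div_by_parts:
  fixes g G :: "real \<Rightarrow> real"
  assumes "a > 0" and cont: "continuous_on UNIV g" and nonneg: "\<And>v. 0 \<le> v \<Longrightarrow> 0 \<le> g v"
    and deriv: "\<And>v. (G has_real_derivative g v) (at v)" and "G 0 = 0"
  shows "(\<integral>\<^sup>+v. ennreal (indicator {0<..} v * (g v * exp (- a * v) / v)) \<partial>lborel) =
         (\<integral>\<^sup>+u. ennreal (indicator {0<..} u * (G u * (exp (- a * u) * (a / u + 1 / u\<^sup>2)))) \<partial>lborel)"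
proof -
  define K where "K u = exp (- a * u) * (a / u + 1 / u\<^sup>2)" for u
  have K_nonneg: "u > 0 \<Longrightarrow> K u \<ge> 0" for u
    using \<open>a > 0\<close> by (auto simp: K_def)
  have [measurable]: "g \<in> borel_measurable borel"
    by (rule borel_measurable_continuous_onI[OF cont])
  define H where "H u v = ennreal (if 0 < v \<and> v < u then g v * K u else 0)" for u v
  have inner_v: "ennreal (indicator {0<..} u * (G u * K u)) = (\<integral>\<^sup>+v. H u v \<partial>lborel)" for u
  proof (cases "u > 0")
    case True
    note primitive = nn_integral_Ioo_primitive[OF True _ nonneg deriv \<open>G 0 = 0\<close>]
    have "(\<integral>\<^sup>+v. H u v \<partial>lborel) = (\<integral>\<^sup>+v. ennreal (indicator {0<..<u} v * g v) * ennreal (K u) \<partial>lborel)"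
      using K_nonneg[OF True] nonneg by (intro nn_integral_cong) (auto simp: H_def indicator_def ennreal_mult')
    also have "\<dots> = (\<integral>\<^sup>+v. ennreal (indicator {0<..<u} v * g v) \<partial>lborel) * ennreal (K u)"
      by (rule nn_integral_multc) measurable
    also have "\<dots> = ennreal (indicator {0<..} u * (G u * K u))"
      using True K_nonneg[OF True] primitive by (simp add: ennreal_mult')
    finally show ?thesis ..
  next
    case False
    then have "H u v = 0" for v
      by (simp add: H_def)
    with False show ?thesis
      by simp
  qed
  have inner_u: "(\<integral>\<^sup>+u. H u v \<partial>lborel) = ennreal (indicator {0<..} v * (g v * exp (- a * v) / v))" for v
  proof (cases "v > 0")
    case True
    have "(\<integral>\<^sup>+u. H u v \<partial>lborel) = (\<integral>\<^sup>+u. ennreal (g v) * ennreal (indicator {v<..} u * K u) \<partial>lborel)"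
      using K_nonneg True nonneg by (intro nn_integral_cong) (auto simp: H_def indicator_def ennreal_mult')
    also have "\<dots> = ennreal (g v) * ennreal (exp (- a * v) / v)"
      using nn_integral_Ioi_exp_div_kernel[OF \<open>a > 0\<close> True]
      by (subst nn_integral_cmult) (auto simp: K_def)
    finally show ?thesis
      using True nonneg[of v] by (simp add: ennreal_mult'[symmetric])
  next
    case False
    then have "H u v = 0" for u
      by (simp add: H_def)
    with False show ?thesis
      by simp
  qed
  have "(\<integral>\<^sup>+u. ennreal (indicator {0<..} u * (G u * K u)) \<partial>lborel) = (\<integral>\<^sup>+u. (\<integral>\<^sup>+v. H u v \<partial>lborel) \<partial>lborel)"
    by (simp add: inner_v)
  also have "\<dots> = (\<integral>\<^sup>+v. (\<integral>\<^sup>+u. H u v \<partial>lborel) \<partial>lborel)"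
    by (rule lborel_pair.Fubini'[of "\<lambda>v u. H u v"]) (unfold H_def K_def case_prod_unfold, measurable)
  finally show ?thesis
    by (simp add: inner_u K_def)
qed

lemma suminf_nn_integral_exp_div_primitives:
  fixes h H :: "nat \<Rightarrow> real \<Rightarrow> real" and g G :: "real \<Rightarrow> real"
  assumes "a > 0"
    and h: "\<And>n. continuous_on UNIV (h n)" "\<And>n v. 0 \<le> v \<Longrightarrow> 0 \<le> h n v"
      "\<And>n v. (H n has_real_derivative h n v) (at v)" "\<And>n. H n 0 = 0"
    and g: "continuous_on UNIV g" "\<And>v. 0 \<le> v \<Longrightarrow> 0 \<le> g v"
      "\<And>v. (G has_real_derivative g v) (at v)" "G 0 = 0"
    and sums: "\<And>u. u > 0 \<Longrightarrow> (\<lambda>n. H n u) sums G u"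
  shows "(\<Sum>n. \<integral>\<^sup>+v. ennreal (indicator {0<..} v * (h n v * exp (- a * v) / v)) \<partial>lborel)
         = (\<integral>\<^sup>+v. ennreal (indicator {0<..} v * (g v * exp (- a * v) / v)) \<partial>lborel)"
proof -
  define K where "K u = exp (- a * u) * (a / u + 1 / u\<^sup>2)" for u
  have "continuous_on UNIV (H n)" for n
    using DERIV_isCont[OF h(3)] by (simp add: continuous_at_imp_continuous_on)
  then have [measurable]: "H n \<in> borel_measurable borel" for n
    by (rule borel_measurable_continuous_onI)
  have [measurable]: "h n \<in> borel_measurable borel" for n
    by (rule borel_measurable_continuous_onI[OF h(1)])
  have "(\<Sum>n. \<integral>\<^sup>+v. ennreal (indicator {0<..} v * (h n v * exp (- a * v) / v)) \<partial>lborel)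
        = (\<Sum>n. \<integral>\<^sup>+u. ennreal (indicator {0<..} u * (H n u * K u)) \<partial>lborel)"
    unfolding K_def using nn_integral_exp_div_by_parts[OF \<open>a > 0\<close> h(1,2,3,4)] by simp
  also have "\<dots> = (\<integral>\<^sup>+u. ennreal (indicator {0<..} u * (G u * K u)) \<partial>lborel)"
  proof (rule nn_integral_Ioi_sums[symmetric])
    show "(\<lambda>u. H n u * K u) \<in> borel_measurable borel" for n
      unfolding K_def by measurable
    show "0 \<le> H n u * K u" if "u > 0" for n u
      using nn_integral_Ioo_primitive(2)[OF that _ h(2,3,4)] that \<open>a > 0\<close> by (simp add: K_def)
    show "(\<lambda>n. H n u * K u) sums (G u * K u)" if "u > 0" for u
      using sums_mult2[OF sums[OF that]] .
  qed
  also have "\<dots> = (\<integral>\<^sup>+v. ennreal (indicator {0<..} v * (g v * exp (- a * v) / v)) \<partial>lborel)"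
    unfolding K_def using nn_integral_exp_div_by_parts[OF \<open>a > 0\<close> g] by simp
  finally show ?thesis .
qed

section \<open>A Frullani-type integral\<close>

lemma nn_integral_Ioo_exp_mult:
  fixes p q v :: real
  assumes "q > 0" "v > 0"
  shows "(\<integral>\<^sup>+s. ennreal (indicator {p<..<p+q} s * (exp (- (v * s)) * (1 - exp (- (v * q))))) \<partial>lborel)
         = ennreal (exp (- (p * v)) * (1 - exp (- (q * v)))\<^sup>2 / v)"
proof -
  define F where "F s = - exp (- (v * s)) * (1 - exp (- (v * q))) / v" for s
  have "(\<integral>\<^sup>+s. ennreal (indicator {p<..<p+q} s * (exp (- (v * s)) * (1 - exp (- (v * q))))) \<partial>lborel)
        = ennreal (F (p + q) - F p)"
  proof (rule nn_integral_Ioo_FTC_nonneg)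
    fix x
    show "DERIV F x :> exp (- (v * x)) * (1 - exp (- (v * q)))"
      unfolding F_def using \<open>v > 0\<close> by (auto intro!: derivative_eq_intros simp: field_simps)
    show "0 \<le> exp (- (v * x)) * (1 - exp (- (v * q)))"
      using assms by simp
    show "(F \<longlongrightarrow> F p) (at_right p)" "(F \<longlongrightarrow> F (p + q)) (at_left (p + q))"
      unfolding F_def using \<open>v > 0\<close> by (auto intro!: tendsto_eq_intros)
  qed (use \<open>q > 0\<close> in \<open>auto intro!: continuous_intros\<close>)
  also have "F (p + q) - F p = exp (- (p * v)) * (1 - exp (- (q * v)))\<^sup>2 / v"
  proof -
    have "exp (- (v * (p + q))) = exp (- (p * v)) * exp (- (q * v))"
      by (simp add: algebra_simps flip: exp_add)
    then show ?thesis
      unfolding F_def using \<open>v > 0\<close> by (simp add: power2_eq_square field_simps mult.commute)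
  qed
  finally show ?thesis .
qed

lemma DERIV_neg_exp_mult_div:
  fixes c :: real
  assumes "c \<noteq> 0"
  shows "((\<lambda>v. - exp (- (c * v)) / c) has_real_derivative exp (- (c * x))) (at x)"
  using assms by (auto intro!: derivative_eq_intros)

lemma nn_integral_exp_diff:
  fixes s q :: real
  assumes "s > 0" "q > 0"
  shows "(\<integral>\<^sup>+v. ennreal (indicator {0<..} v * (exp (- (s * v)) - exp (- ((s + q) * v)))) \<partial>lborel)
         = ennreal (1 / s - 1 / (s + q))"
proof -
  define F where "F v = - exp (- (s * v)) / s - (- exp (- ((s + q) * v)) / (s + q))" for v
  have "(\<integral>\<^sup>+v. ennreal (indicator {0<..} v * (exp (- (s * v)) - exp (- ((s + q) * v)))) \<partial>lborel)
        = ennreal (0 - F 0)"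
  proof (rule nn_integral_Ioi_FTC_nonneg)
    fix x :: real
    show "DERIV F x :> exp (- (s * x)) - exp (- ((s + q) * x))"
      unfolding F_def using assms by (intro DERIV_diff DERIV_neg_exp_mult_div) auto
    show "0 < x \<Longrightarrow> 0 \<le> exp (- (s * x)) - exp (- ((s + q) * x))"
      using assms by (simp add: algebra_simps mult_left_mono)
    have exp_lim: "((\<lambda>v. exp (- (c * v))) \<longlongrightarrow> 0) at_top" if "c > 0" for c :: real
      using that by real_asymp
    show "(F \<longlongrightarrow> 0) at_top"
      unfolding F_def
      using tendsto_diff[OF tendsto_divide[OF tendsto_minus[OF exp_lim[of s]] tendsto_const]
                            tendsto_divide[OF tendsto_minus[OF exp_lim[of "s + q"]] tendsto_const]] assms
      by simp
    show "(F \<longlongrightarrow> F 0) (at_right 0)"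
      unfolding F_def using assms by (auto intro!: tendsto_eq_intros)
  qed (auto intro!: continuous_intros)
  then show ?thesis
    by (simp add: F_def)
qed

text \<open>Write the squared difference as an integral of \<open>exp (- v * s)\<close> over
  \<open>s \<in> (p, p + q)\<close> and apply Tonelli.\<close>

lemma nn_integral_Frullani_square:
  fixes p q :: real
  assumes "p > 0" "q > 0"
  shows "(\<integral>\<^sup>+v. ennreal (indicator {0<..} v * (exp (- (p * v)) * (1 - exp (- (q * v)))\<^sup>2 / v)) \<partial>lborel)
         = ennreal (2 * ln (p + q) - ln p - ln (p + 2 * q))"
proof -
  define H where "H v s = ennreal (indicator {0<..} v * indicator {p<..<p+q} s
                                     * (exp (- (v * s)) * (1 - exp (- (v * q)))))" for v s
  have inner_s: "(\<integral>\<^sup>+s. H v s \<partial>lborel)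
      = ennreal (indicator {0<..} v * (exp (- (p * v)) * (1 - exp (- (q * v)))\<^sup>2 / v))" for v
    by (cases "v > 0") (simp_all add: H_def nn_integral_Ioo_exp_mult \<open>q > 0\<close>)
  have inner_v: "(\<integral>\<^sup>+v. H v s \<partial>lborel) = ennreal (indicator {p<..<p+q} s * (1 / s - 1 / (s + q)))" for s
  proof (cases "s \<in> {p<..<p+q}")
    case True
    then have "s > 0"
      using \<open>p > 0\<close> by simp
    have "exp (- (v * s)) * (1 - exp (- (v * q))) = exp (- (s * v)) - exp (- ((s + q) * v))" for v
      by (simp add: algebra_simps flip: exp_add)
    then show ?thesis
      using True nn_integral_exp_diff[OF \<open>s > 0\<close> \<open>q > 0\<close>] by (simp add: H_def)
  qed (simp add: H_def)
  have "(\<integral>\<^sup>+v. ennreal (indicator {0<..} v * (exp (- (p * v)) * (1 - exp (- (q * v)))\<^sup>2 / v)) \<partial>lborel)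
        = (\<integral>\<^sup>+v. (\<integral>\<^sup>+s. H v s \<partial>lborel) \<partial>lborel)"
    by (simp add: inner_s)
  also have "\<dots> = (\<integral>\<^sup>+s. (\<integral>\<^sup>+v. H v s \<partial>lborel) \<partial>lborel)"
    by (rule lborel_pair.Fubini'[of "\<lambda>s v. H v s"]) (unfold H_def case_prod_unfold, measurable)
  also have "\<dots> = (\<integral>\<^sup>+s. ennreal (indicator {p<..<p+q} s * (1 / s - 1 / (s + q))) \<partial>lborel)"
    by (simp add: inner_v)
  also have "\<dots> = ennreal ((ln (p + q) - ln (p + q + q)) - (ln p - ln (p + q)))"
  proof (rule nn_integral_Ioo_FTC_nonneg)
    fix x assume x: "p < x" "x < p + q"
    with assms show "DERIV (\<lambda>s. ln s - ln (s + q)) x :> 1 / x - 1 / (x + q)"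
      by (auto intro!: derivative_eq_intros simp: field_simps)
    from x assms show "isCont (\<lambda>s. 1 / s - 1 / (s + q)) x"
      by (auto intro!: continuous_intros)
    from x assms show "0 \<le> 1 / x - 1 / (x + q)"
      by (simp add: field_simps)
  next
    show "((\<lambda>s. ln s - ln (s + q)) \<longlongrightarrow> ln p - ln (p + q)) (at_right p)"
      using assms by (auto intro!: tendsto_eq_intros)
    show "((\<lambda>s. ln s - ln (s + q)) \<longlongrightarrow> ln (p + q) - ln (p + q + q)) (at_left (p + q))"
      using assms by (auto intro!: tendsto_eq_intros simp: algebra_simps)
  qed (use assms in simp)
  finally show ?thesis
    by (simp add: algebra_simps)
qed

section \<open>A series for the logarithm of a ratio of Gamma values\<close>

lemma sum_ln_Gamma_ratio_terms:
  fixes b :: real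
  assumes "b > 0"
  shows "(\<Sum>i<n. 2 * ln (b + real i + 1/2) - ln (b + real i) - ln (b + real i + 1))
         = 2 * ln (pochhammer (b + 1/2) n) - 2 * ln (pochhammer b n) + ln b - ln (b + real n)"
proof (induction n)
  case (Suc n)
  have pos: "pochhammer (b + 1/2) n > 0" "pochhammer b n > 0"
    using assms by (auto intro!: pochhammer_pos)
  have "ln (pochhammer (b + 1/2) (Suc n)) = ln (pochhammer (b + 1/2) n) + ln (b + real n + 1/2)"
    using pos assms by (subst pochhammer_Suc, subst ln_mult_pos) (auto simp: algebra_simps)
  moreover have "ln (pochhammer b (Suc n)) = ln (pochhammer b n) + ln (b + real n)"
    using pos assms by (simp add: pochhammer_Suc ln_mult_pos)
  ultimately show ?case
    using Suc.IH by (simp add: algebra_simps)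
qed simp

lemma ln_pochhammer_Gamma_series:
  fixes z :: real
  assumes "z > 0" "n > 0"
  shows "ln (pochhammer z (n + 1)) = ln (fact n) + z * ln (real n) - ln (Gamma_series z n)"
proof -
  have "pochhammer z (n + 1) > 0"
    using assms by (intro pochhammer_pos)
  moreover have "Gamma_series z n = fact n * exp (z * ln (real n)) / pochhammer z (n + 1)"
    by (simp add: Gamma_series_def)
  ultimately show ?thesis
    by (simp add: ln_div ln_mult_pos)
qed

lemma ln_Gamma_ratio_sums:
  fixes b :: real
  assumes "b > 0"
  shows "(\<lambda>i. 2 * ln (b + real i + 1/2) - ln (b + real i) - ln (b + real i + 1))
           sums ln (b * Gamma b ^ 2 / Gamma (b + 1/2) ^ 2)"
proof -
  define S where "S n = (\<Sum>i<n. 2 * ln (b + real i + 1/2) - ln (b + real i) - ln (b + real i + 1))" for n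
  define T where "T n = (ln (real n) - ln (b + real n + 1)) + ln b
                          + 2 * ln (Gamma_series b n) - 2 * ln (Gamma_series (b + 1/2) n)" for n
  have "b + 1/2 > 0"
    using assms by simp
  have Gamma_nonzero: "Gamma b \<noteq> 0" "Gamma (b + 1/2) \<noteq> 0"
    using Gamma_real_pos[OF assms] Gamma_real_pos[OF \<open>b + 1/2 > 0\<close>] by linarith+
  have T_eq: "T n = S (Suc n)" if "n > 0" for n
  proof -
    have "S (Suc n) = 2 * ln (pochhammer (b + 1/2) (n + 1)) - 2 * ln (pochhammer b (n + 1))
                      + ln b - ln (b + real (n + 1))"
      using sum_ln_Gamma_ratio_terms[OF assms, of "Suc n"] by (simp add: S_def)
    then show ?thesis
      unfolding T_def ln_pochhammer_Gamma_series[OF assms that]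
        ln_pochhammer_Gamma_series[OF \<open>b + 1/2 > 0\<close> that]
      by (simp add: algebra_simps)
  qed
  have T_lim: "T \<longlonglongrightarrow> 0 + ln b + 2 * ln (Gamma b) - 2 * ln (Gamma (b + 1/2))"
    unfolding T_def
  proof (intro tendsto_intros)
    show "(\<lambda>n. ln (real n) - ln (b + real n + 1)) \<longlonglongrightarrow> 0"
      using assms by real_asymp
  qed (use Gamma_nonzero in auto)
  have "(\<lambda>n. S (Suc n)) \<longlonglongrightarrow> 0 + ln b + 2 * ln (Gamma b) - 2 * ln (Gamma (b + 1/2))"
  proof (rule Lim_transform_eventually[OF T_lim])
    show "\<forall>\<^sub>F n in sequentially. T n = S (Suc n)"
      using eventually_gt_at_top[of "0::nat"] by eventually_elim (rule T_eq)
  qed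
  then have "S \<longlonglongrightarrow> 0 + ln b + 2 * ln (Gamma b) - 2 * ln (Gamma (b + 1/2))"
    by (rule LIMSEQ_imp_Suc)
  moreover have "0 + ln b + 2 * ln (Gamma b) - 2 * ln (Gamma (b + 1/2))
                 = ln (b * Gamma b ^ 2 / Gamma (b + 1/2) ^ 2)"
    using assms Gamma_nonzero by (simp add: ln_div ln_mult ln_realpow)
  ultimately show ?thesis
    unfolding sums_def S_def[abs_def] by simp
qed

lemma ln_add_ln_le_two_ln_midpoint:
  fixes x :: real
  assumes "x > 0"
  shows "ln x + ln (x + 1) \<le> 2 * ln (x + 1/2)"
proof -
  have "ln (x * (x + 1)) \<le> ln ((x + 1/2)\<^sup>2)"
    using assms by (intro ln_mono) (auto simp: power2_eq_square algebra_simps intro: add_pos_pos)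
  with assms show ?thesis
    by (simp add: ln_mult_pos ln_realpow)
qed

lemma ln_Gamma_ratio_nonneg:
  fixes b :: real
  assumes "b > 0"
  shows "0 \<le> ln (b * Gamma b ^ 2 / Gamma (b + 1/2) ^ 2)"
  using ln_add_ln_le_two_ln_midpoint[of "b + real i" for i] assms
  by (intro sums_le[OF _ sums_zero ln_Gamma_ratio_sums[OF assms]]) (simp add: algebra_simps)

section \<open>The product formula for the hyperbolic cosine\<close>

lemma prod_split_even_odd:
  fixes f :: "nat \<Rightarrow> 'a::comm_monoid_mult"
  shows "prod f {1..2*n} = prod (\<lambda>j. f (2*j)) {1..n} * prod (\<lambda>j. f (2*j+1)) {..<n}"
proof (induction n)
  case (Suc n)
  have "{1..2 * Suc n} = insert (2*n+2) (insert (2*n+1) {1..2*n})"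
    by auto
  then show ?case
    using Suc.IH by (simp add: algebra_simps)
qed simp

text \<open>The odd factors of the sine product at \<open>2 z\<close> are what remains after dividing
  by the sine product at \<open>z\<close>, and \<open>sin (2 \<pi> z) / (2 sin (\<pi> z)) = cos (\<pi> z)\<close>.\<close>

lemma cos_product_formula_complex:
  fixes z :: complex
  assumes "sin (of_real pi * z) \<noteq> 0"
  shows "(\<lambda>n. \<Prod>j<n. 1 - 4 * z^2 / of_nat (2*j+1)^2) \<longlonglongrightarrow> cos (of_real pi * z)"
proof -
  define Q where "Q w n = (\<Prod>k=1..n. 1 - w^2 / of_nat k^2)" for w :: complex and n
  define C where "C n = (\<Prod>j<n. 1 - 4 * z^2 / of_nat (2*j+1)^2)" for n
  have sin_z: "(\<lambda>n. of_real pi * z * Q z n) \<longlonglongrightarrow> sin (of_real pi * z)"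
    unfolding Q_def by (rule sin_product_formula_complex)
  have "(\<lambda>n. of_real pi * (2*z) * Q (2*z) n) \<longlonglongrightarrow> sin (of_real pi * (2*z))"
    unfolding Q_def by (rule sin_product_formula_complex)
  from LIMSEQ_subseq_LIMSEQ[OF this, of "\<lambda>n. 2*n"]
  have sin_2z: "(\<lambda>n. of_real pi * (2*z) * Q (2*z) (2*n)) \<longlonglongrightarrow> sin (of_real pi * (2*z))"
    by (simp add: strict_mono_def o_def)
  have Q_double: "Q (2*z) (2*n) = Q z n * C n" for n
  proof -
    have "Q (2*z) (2*n) = (\<Prod>j=1..n. 1 - (2*z)^2 / of_nat (2*j)^2)
                          * (\<Prod>j<n. 1 - (2*z)^2 / of_nat (2*j+1)^2)"
      unfolding Q_def by (rule prod_split_even_odd)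
    also have "(\<Prod>j=1..n. 1 - (2*z)^2 / of_nat (2*j)^2) = Q z n"
      unfolding Q_def by (intro prod.cong refl) (simp add: power_mult_distrib)
    also have "(\<Prod>j<n. 1 - (2*z)^2 / of_nat (2*j+1)^2) = C n"
      unfolding C_def by (intro prod.cong refl) (simp add: power_mult_distrib)
    finally show ?thesis .
  qed
  have "(\<lambda>n. (of_real pi * (2*z) * Q (2*z) (2*n)) / (2 * (of_real pi * z * Q z n)))
          \<longlonglongrightarrow> sin (of_real pi * (2*z)) / (2 * sin (of_real pi * z))"
    using assms by (intro tendsto_intros sin_2z sin_z) auto
  also have "sin (of_real pi * (2*z)) / (2 * sin (of_real pi * z)) = cos (of_real pi * z)"
  proof -
    have "of_real pi * (2*z) = 2 * (of_real pi * z)"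
      by simp
    then have "sin (of_real pi * (2*z)) = 2 * sin (of_real pi * z) * cos (of_real pi * z)"
      by (simp only: sin_double)
    with assms show ?thesis
      by simp
  qed
  finally have quotient_lim: "(\<lambda>n. (of_real pi * (2*z) * Q (2*z) (2*n)) / (2 * (of_real pi * z * Q z n)))
                             \<longlonglongrightarrow> cos (of_real pi * z)" .
  have "(C \<longlongrightarrow> cos (of_real pi * z)) sequentially"
  proof (rule Lim_transform_eventually[OF quotient_lim])
    show "\<forall>\<^sub>F n in sequentially. of_real pi * (2*z) * Q (2*z) (2*n) / (2 * (of_real pi * z * Q z n)) = C n"
      using tendsto_imp_eventually_ne[OF sin_z assms]
      by eventually_elim (simp only: Q_double, simp add: field_simps)
  qed
  then show ?thesis
    unfolding C_def .
qed

lemma sinh_complex_of_real: "sinh (complex_of_real t) = complex_of_real (sinh t)"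
  by (simp add: sinh_def scaleR_conv_of_real flip: exp_of_real)

lemma cosh_complex_of_real: "cosh (complex_of_real t) = complex_of_real (cosh t)"
  by (simp add: cosh_def scaleR_conv_of_real flip: exp_of_real)

lemma cosh_product_formula:
  fixes y :: real
  shows "(\<lambda>n. \<Prod>j<n. 1 + 4 * y^2 / real (2*j+1)^2) \<longlonglongrightarrow> cosh (pi * y)"
proof (cases "y = 0")
  case False
  define z where "z = \<i> * complex_of_real y"
  have arg: "complex_of_real pi * z = \<i> * complex_of_real (pi * y)"
    by (simp add: z_def)
  have "sin (complex_of_real pi * z) = \<i> * sinh (complex_of_real (pi * y))"
    unfolding arg by (simp add: sinh_conv_sin)
  also have "\<dots> = \<i> * complex_of_real (sinh (pi * y))"
    by (simp only: sinh_complex_of_real)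
  finally have "sin (complex_of_real pi * z) \<noteq> 0"
    using False by simp
  from cos_product_formula_complex[OF this]
  have "(\<lambda>n. \<Prod>j<n. 1 - 4 * z^2 / of_nat (2*j+1)^2) \<longlonglongrightarrow> cos (complex_of_real pi * z)" .
  also have "(\<lambda>n. \<Prod>j<n. 1 - 4 * z^2 / of_nat (2*j+1)^2)
             = (\<lambda>n. complex_of_real (\<Prod>j<n. 1 + 4 * y^2 / real (2*j+1)^2))"
    by (simp add: z_def power_mult_distrib)
  also have "cos (complex_of_real pi * z) = complex_of_real (cosh (pi * y))"
    unfolding arg by (simp only: cosh_conv_cos[symmetric] cosh_complex_of_real)
  finally show ?thesis
    by (simp only: tendsto_of_real_iff)
qed simp

lemma ln_cosh_sums:
  fixes y :: real
  shows "(\<lambda>j. ln (1 + 4 * y^2 / real (2*j+1)^2)) sums ln (cosh (pi * y))"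
proof -
  have pos: "1 + 4 * y^2 / real (2*j+1)^2 > 0" for j
    by (intro add_pos_nonneg) auto
  have "(\<lambda>n. ln (\<Prod>j<n. 1 + 4 * y^2 / real (2*j+1)^2)) \<longlonglongrightarrow> ln (cosh (pi * y))"
    by (intro tendsto_ln cosh_product_formula) (simp add: less_imp_neq[symmetric])
  moreover have "ln (\<Prod>j<n. 1 + 4 * y^2 / real (2*j+1)^2) = (\<Sum>j<n. ln (1 + 4 * y^2 / real (2*j+1)^2))" for n
    by (rule ln_prod) (use pos in \<open>auto simp: less_imp_neq[symmetric]\<close>)
  ultimately show ?thesis
    by (simp add: sums_def)
qed

lemma tanh_exp_div_sums:
  fixes a c v :: real
  assumes "c > 0" "v > 0"
  shows "(\<lambda>i. exp (- ((a + 4 * real i * c) * v)) * (1 - exp (- (2 * c * v)))\<^sup>2 / v)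
           sums (tanh (c * v) * exp (- a * v) / v)"
proof -
  define w where "w = exp (- (2 * c * v))"
  have w: "0 < w" "w < 1"
    using assms by (auto simp: w_def)
  define C where "C = exp (- (a * v)) * (1 - w)\<^sup>2 / v"
  have "norm (w\<^sup>2) < 1"
    using w by (simp add: abs_square_less_1)
  from sums_mult[OF geometric_sums[OF this], of C]
  have "(\<lambda>i. C * (w\<^sup>2) ^ i) sums (C * (1 / (1 - w\<^sup>2)))" .
  moreover have "C * (w\<^sup>2) ^ i = exp (- ((a + 4 * real i * c) * v)) * (1 - w)\<^sup>2 / v" for i
  proof -
    have "(w\<^sup>2) ^ i = w ^ (2 * i)"
      by (simp add: power_mult)
    also have "\<dots> = exp (real (2 * i) * (- (2 * c * v)))"
      unfolding w_def by (rule exp_of_nat_mult[symmetric])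
    finally have "(w\<^sup>2) ^ i = exp (real (2 * i) * (- (2 * c * v)))" .
    then have "exp (- (a * v)) * (w\<^sup>2) ^ i = exp (- ((a + 4 * real i * c) * v))"
      by (simp add: algebra_simps flip: exp_add)
    then show ?thesis
      unfolding C_def by (simp add: field_simps)
  qed
  moreover have "C * (1 / (1 - w\<^sup>2)) = tanh (c * v) * exp (- a * v) / v"
  proof -
    have "1 - w\<^sup>2 = (1 - w) * (1 + w)"
      by (simp add: algebra_simps power2_eq_square)
    with w have "(1 - w)\<^sup>2 / (1 - w\<^sup>2) = (1 - w) / (1 + w)"
      by (simp add: power2_eq_square)
    moreover have "tanh (c * v) = (1 - w) / (1 + w)"
      unfolding tanh_real_altdef w_def by (simp add: algebra_simps)
    moreover have "C * (1 / (1 - w\<^sup>2)) = exp (- (a * v)) / v * ((1 - w)\<^sup>2 / (1 - w\<^sup>2))"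
      by (simp add: C_def)
    ultimately show ?thesis
      by (simp add: ac_simps)
  qed
  ultimately show ?thesis
    by (simp add: w_def)
qed

lemma nn_integral_tanh_exp_div:
  fixes a c :: real
  assumes "a > 0" "c > 0"
  defines "b \<equiv> a / (4 * c)"
  shows "(\<integral>\<^sup>+v. ennreal (indicator {0<..} v * (tanh (c * v) * exp (- a * v) / v)) \<partial>lborel)
         = ennreal (ln (b * Gamma b ^ 2 / Gamma (b + 1/2) ^ 2))"
proof -
  define p where "p i = a + 4 * real i * c" for i
  define d where "d i = 2 * ln (b + real i + 1/2) - ln (b + real i) - ln (b + real i + 1)" for i
  have "b > 0"
    using assms by (simp add: b_def)
  have p_pos: "p i > 0" for i
    unfolding p_def using assms by (intro add_pos_nonneg) auto
  have d_eq: "2 * ln (p i + 2 * c) - ln (p i) - ln (p i + 2 * (2 * c)) = d i" for i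
  proof -
    have "p i = 4 * c * (b + real i)" "p i + 2 * c = 4 * c * (b + real i + 1/2)"
      "p i + 2 * (2 * c) = 4 * c * (b + real i + 1)"
      unfolding p_def b_def using \<open>c > 0\<close> by (simp_all add: algebra_simps)
    moreover have "4 * c > 0" "b + real i > 0" "b + real i + 1/2 > 0" "b + real i + 1 > 0"
      using \<open>c > 0\<close> \<open>b > 0\<close> by auto
    ultimately show ?thesis
      unfolding d_def by (simp only: ln_mult_pos) simp
  qed
  have d_nonneg: "d i \<ge> 0" for i
    using ln_add_ln_le_two_ln_midpoint[of "b + real i"] \<open>b > 0\<close> by (simp add: d_def algebra_simps)
  have "(\<integral>\<^sup>+v. ennreal (indicator {0<..} v * (tanh (c * v) * exp (- a * v) / v)) \<partial>lborel)
        = (\<Sum>i. \<integral>\<^sup>+v. ennreal (indicator {0<..} v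
                      * (exp (- (p i * v)) * (1 - exp (- (2 * c * v)))\<^sup>2 / v)) \<partial>lborel)"
    by (rule nn_integral_Ioi_sums) (use tanh_exp_div_sums[OF \<open>c > 0\<close>] in \<open>auto simp: p_def\<close>)
  also have "\<dots> = (\<Sum>i. ennreal (d i))"
    using nn_integral_Frullani_square[OF p_pos, of "2 * c"] assms d_eq by simp
  also have "\<dots> = ennreal (ln (b * Gamma b ^ 2 / Gamma (b + 1/2) ^ 2))"
    using d_nonneg ln_Gamma_ratio_sums[OF \<open>b > 0\<close>] by (intro suminf_ennreal_eq) (auto simp: d_def)
  finally show ?thesis .
qed

lemma artanh_sums:
  fixes y :: real
  assumes "0 \<le> y" "y < 1"
  shows "(\<lambda>n. y ^ (2 * n + 1) / real (2 * n + 1)) sums artanh y"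
proof -
  define x where "x = (1 + y) / (1 - y)"
  have "x > 0"
    using assms by (simp add: x_def)
  have "(x - 1) / (x + 1) = y"
    using assms by (simp add: x_def field_simps)
  with ln_series_quadratic[OF \<open>x > 0\<close>]
  have "(\<lambda>n. 2 * y ^ (2 * n + 1) / real (2 * n + 1)) sums ln x"
    by simp
  from sums_divide[OF this, of 2]
  have "(\<lambda>n. 2 * y ^ (2 * n + 1) / real (2 * n + 1) / 2) sums (ln x / 2)" .
  also have "(\<lambda>n. 2 * y ^ (2 * n + 1) / real (2 * n + 1) / 2) = (\<lambda>n. y ^ (2 * n + 1) / real (2 * n + 1))"
    by (rule ext) (simp add: field_simps)
  finally show ?thesis
    by (simp add: artanh_def x_def)
qed

lemma DERIV_ln_one_plus_square_div:
  fixes M :: real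
  assumes "M \<noteq> 0"
  shows "((\<lambda>u. ln (1 + u\<^sup>2 / M\<^sup>2)) has_real_derivative 2 * v / (M\<^sup>2 + v\<^sup>2)) (at v)"
proof -
  have "M\<^sup>2 + v\<^sup>2 > 0" "1 + v\<^sup>2 / M\<^sup>2 > 0"
    using assms by (simp_all add: add_pos_nonneg)
  then show ?thesis
    using assms by (auto intro!: derivative_eq_intros simp: field_simps power2_eq_square)
qed

lemma DERIV_ln_cosh_mult:
  fixes c :: real
  shows "((\<lambda>u. ln (cosh (c * u))) has_real_derivative c * tanh (c * v)) (at v)"
  by (auto intro!: derivative_eq_intros simp: tanh_def field_simps)

lemma nn_integral_exp_div_quadratic_rescale:
  fixes a m k :: real
  assumes "a > 0" "m > 0" "k > 0"
  shows "(\<integral>\<^sup>+t. ennreal (indicator {0<..} t * (exp (- (m * k * t)) / (k * (a\<^sup>2 + t\<^sup>2)))) \<partial>lborel)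
         = (\<integral>\<^sup>+v. ennreal (indicator {0<..} v * (m / a * v / ((m * k)\<^sup>2 + v\<^sup>2) * exp (- a * v) / v)) \<partial>lborel)"
proof -
  define c where "c = a / (m * k)"
  have "c > 0"
    using assms by (simp add: c_def)
  have "(\<integral>\<^sup>+t. ennreal (indicator {0<..} t * (exp (- (m * k * t)) / (k * (a\<^sup>2 + t\<^sup>2)))) \<partial>lborel)
        = (\<integral>\<^sup>+v. ennreal (indicator {0<..} v * (c * (exp (- (m * k * (c * v))) / (k * (a\<^sup>2 + (c * v)\<^sup>2))))) \<partial>lborel)"
    by (rule nn_integral_Ioi_rescale[OF \<open>c > 0\<close>]) measurable
  also have "\<dots> = (\<integral>\<^sup>+v. ennreal (indicator {0<..} v * (m / a * v / ((m * k)\<^sup>2 + v\<^sup>2) * exp (- a * v) / v)) \<partial>lborel)"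
  proof (intro nn_integral_cong)
    fix v :: real
    have "c * (exp (- (m * k * (c * v))) / (k * (a\<^sup>2 + (c * v)\<^sup>2)))
          = m / a * v / ((m * k)\<^sup>2 + v\<^sup>2) * exp (- a * v) / v" if "v > 0"
    proof -
      have "m * k * (c * v) = a * v"
        using assms by (simp add: c_def)
      moreover have "a\<^sup>2 + (c * v)\<^sup>2 = a\<^sup>2 * ((m * k)\<^sup>2 + v\<^sup>2) / (m * k)\<^sup>2"
        using assms unfolding c_def by (simp add: field_simps power2_eq_square)
      ultimately show ?thesis
        using assms that unfolding c_def by (simp add: power2_eq_square)
    qed
    then show "ennreal (indicator {0<..} v * (c * (exp (- (m * k * (c * v))) / (k * (a\<^sup>2 + (c * v)\<^sup>2)))))
        = ennreal (indicator {0<..} v * (m / a * v / ((m * k)\<^sup>2 + v\<^sup>2) * exp (- a * v) / v))"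
      by (cases "v > 0") (simp_all add: indicator_def)
  qed
  finally show ?thesis .
qed

lemma nn_integral_artanh_exp_div_series:
  fixes a m :: real
  assumes "a > 0" "m > 0"
  shows "(\<integral>\<^sup>+t. ennreal (indicator {0<..} t * (artanh (exp (- (m * t))) / (a\<^sup>2 + t\<^sup>2))) \<partial>lborel)
         = (\<Sum>n. \<integral>\<^sup>+v. ennreal (indicator {0<..} v
                     * (m / a * v / ((m * real (2 * n + 1))\<^sup>2 + v\<^sup>2) * exp (- a * v) / v)) \<partial>lborel)"
proof -
  define k where "k n = real (2 * n + 1)" for n
  have "(\<integral>\<^sup>+t. ennreal (indicator {0<..} t * (artanh (exp (- (m * t))) / (a\<^sup>2 + t\<^sup>2))) \<partial>lborel)
        = (\<Sum>n. \<integral>\<^sup>+t. ennreal (indicator {0<..} t * (exp (- (m * k n * t)) / (k n * (a\<^sup>2 + t\<^sup>2)))) \<partial>lborel)"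
  proof (rule nn_integral_Ioi_sums)
    fix t :: real assume "t > 0"
    with \<open>m > 0\<close> have "0 \<le> exp (- (m * t))" "exp (- (m * t)) < 1"
      by simp_all
    note series = sums_divide[OF artanh_sums[OF this], of "a\<^sup>2 + t\<^sup>2"]
    have "exp (- (m * k n * t)) / (k n * (a\<^sup>2 + t\<^sup>2))
          = exp (- (m * t)) ^ (2 * n + 1) / real (2 * n + 1) / (a\<^sup>2 + t\<^sup>2)" for n
      unfolding k_def by (subst exp_of_nat_mult[symmetric]) (simp add: algebra_simps)
    with series
    show "(\<lambda>n. exp (- (m * k n * t)) / (k n * (a\<^sup>2 + t\<^sup>2))) sums (artanh (exp (- (m * t))) / (a\<^sup>2 + t\<^sup>2))"
      by simp
  qed (auto simp: k_def intro!: divide_nonneg_nonneg)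
  also have "\<dots> = (\<Sum>n. \<integral>\<^sup>+v. ennreal (indicator {0<..} v
                     * (m / a * v / ((m * k n)\<^sup>2 + v\<^sup>2) * exp (- a * v) / v)) \<partial>lborel)"
    using nn_integral_exp_div_quadratic_rescale[OF assms] by (simp add: k_def)
  finally show ?thesis
    by (simp add: k_def)
qed

text \<open>The partial fraction expansion of \<open>tanh\<close>, integrated against \<open>exp (- a * v) / v\<close>;
  it is obtained from the product formula for \<open>cosh\<close> via the primitives.\<close>

lemma suminf_nn_integral_partial_fractions_tanh:
  fixes a m :: real
  assumes "a > 0" "m > 0"
  shows "(\<Sum>n. \<integral>\<^sup>+v. ennreal (indicator {0<..} v
                 * (m / a * v / ((m * real (2 * n + 1))\<^sup>2 + v\<^sup>2) * exp (- a * v) / v)) \<partial>lborel)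
         = (\<integral>\<^sup>+v. ennreal (indicator {0<..} v
                 * (pi / (4 * a) * tanh (pi / (2 * m) * v) * exp (- a * v) / v)) \<partial>lborel)"
proof -
  define c where "c = pi / (2 * m)"
  define M where "M n = m * real (2 * n + 1)" for n
  have "M n \<noteq> 0" for n
    using assms by (simp add: M_def)
  show ?thesis
    unfolding c_def[symmetric] M_def[symmetric]
  proof (rule suminf_nn_integral_exp_div_primitives[OF \<open>a > 0\<close>,
      where h = "\<lambda>n v. m / a * v / ((M n)\<^sup>2 + v\<^sup>2)" and H = "\<lambda>n u. m / (2 * a) * ln (1 + u\<^sup>2 / (M n)\<^sup>2)"
        and g = "\<lambda>v. pi / (4 * a) * tanh (c * v)" and G = "\<lambda>u. m / (2 * a) * ln (cosh (c * u))"])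
    show "continuous_on UNIV (\<lambda>v. m / a * v / ((M n)\<^sup>2 + v\<^sup>2))" for n
      using \<open>M n \<noteq> 0\<close> by (intro continuous_intros) (auto simp: add_pos_nonneg less_imp_neq[symmetric])
    show "((\<lambda>u. m / (2 * a) * ln (1 + u\<^sup>2 / (M n)\<^sup>2)) has_real_derivative m / a * v / ((M n)\<^sup>2 + v\<^sup>2)) (at v)"
      for n v
      using DERIV_cmult[OF DERIV_ln_one_plus_square_div[OF \<open>M n \<noteq> 0\<close>], of "m / (2 * a)" v]
      by (simp add: field_simps)
    show "((\<lambda>u. m / (2 * a) * ln (cosh (c * u))) has_real_derivative pi / (4 * a) * tanh (c * v)) (at v)" for v
      using DERIV_cmult[OF DERIV_ln_cosh_mult, of "m / (2 * a)" c v] \<open>m > 0\<close>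
      unfolding c_def by (simp add: field_simps)
    show "(\<lambda>n. m / (2 * a) * ln (1 + u\<^sup>2 / (M n)\<^sup>2)) sums (m / (2 * a) * ln (cosh (c * u)))" for u
    proof -
      have "4 * (u / (2 * m))^2 / real (2 * n + 1)^2 = u\<^sup>2 / (M n)\<^sup>2" for n
        using \<open>m > 0\<close> by (simp add: M_def field_simps power2_eq_square)
      moreover have "pi * (u / (2 * m)) = c * u"
        by (simp add: c_def)
      ultimately show ?thesis
        using sums_mult[OF ln_cosh_sums[of "u / (2 * m)"], of "m / (2 * a)"] by simp
    qed
  qed (use assms in \<open>auto simp: c_def intro!: continuous_intros\<close>)
qed

lemma nn_integral_artanh_exp_div_quadratic:
  fixes a m :: real
  assumes "a > 0" "m > 0"
  defines "b \<equiv> a * m / (2 * pi)"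
  shows "(\<integral>\<^sup>+t. ennreal (indicator {0<..} t * (artanh (exp (- (m * t))) / (a\<^sup>2 + t\<^sup>2))) \<partial>lborel)
         = ennreal (pi / (4 * a) * ln (b * Gamma b ^ 2 / Gamma (b + 1/2) ^ 2))"
proof -
  define c where "c = pi / (2 * m)"
  have "c > 0" "b > 0" "b = a / (4 * c)"
    using assms by (simp_all add: c_def b_def)
  have tanh_measurable: "(\<lambda>v. tanh (c * v) * exp (- a * v) / v) \<in> borel_measurable borel"
    by (intro borel_measurable_times borel_measurable_divide borel_measurable_continuous_onI
        continuous_intros) auto
  have "(\<integral>\<^sup>+t. ennreal (indicator {0<..} t * (artanh (exp (- (m * t))) / (a\<^sup>2 + t\<^sup>2))) \<partial>lborel)
        = (\<integral>\<^sup>+v. ennreal (indicator {0<..} v * (pi / (4 * a) * (tanh (c * v) * exp (- a * v) / v))) \<partial>lborel)"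
    unfolding nn_integral_artanh_exp_div_series[OF assms(1,2)]
      suminf_nn_integral_partial_fractions_tanh[OF assms(1,2)] c_def
    by (simp add: mult.assoc)
  also have "\<dots> = ennreal (pi / (4 * a)) *
      (\<integral>\<^sup>+v. ennreal (indicator {0<..} v * (tanh (c * v) * exp (- a * v) / v)) \<partial>lborel)"
    using nn_integral_Ioi_cmult[OF _ tanh_measurable, of "pi / (4 * a)"] \<open>a > 0\<close> by simp
  also have "\<dots> = ennreal (pi / (4 * a)) * ennreal (ln (b * Gamma b ^ 2 / Gamma (b + 1/2) ^ 2))"
    using nn_integral_tanh_exp_div[OF \<open>a > 0\<close> \<open>c > 0\<close>] \<open>b = a / (4 * c)\<close> by simp
  also have "\<dots> = ennreal (pi / (4 * a) * ln (b * Gamma b ^ 2 / Gamma (b + 1/2) ^ 2))"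
    using ln_Gamma_ratio_nonneg[OF \<open>b > 0\<close>] \<open>a > 0\<close> by (simp add: ennreal_mult'[symmetric])
  finally show ?thesis .
qed

lemma artanh_powr_div_nonneg:
  fixes a m x :: real
  assumes "a > 0" "m > 0" "0 < x" "x < 1"
  shows "0 \<le> artanh (x powr m) / (x * (a\<^sup>2 + (ln x)\<^sup>2))"
proof -
  have "x powr m < 1"
    using assms powr_less_mono2[of m x 1] by simp
  then have "0 \<le> artanh (x powr m)"
    using assms by (simp add: artanh_def)
  moreover have "0 < x * (a\<^sup>2 + (ln x)\<^sup>2)"
    using assms by (intro mult_pos_pos add_pos_nonneg) auto
  ultimately show ?thesis
    by simp
qed

lemma nn_integral_artanh_powr_exp_subst:
  fixes a m :: real
  assumes "a > 0" "m > 0"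
  shows "(\<integral>\<^sup>+x. ennreal (indicator {0<..<1} x * (artanh (x powr m) / (x * (a\<^sup>2 + (ln x)\<^sup>2)))) \<partial>lborel)
         = (\<integral>\<^sup>+t. ennreal (indicator {0<..} t * (artanh (exp (- (m * t))) / (a\<^sup>2 + t\<^sup>2))) \<partial>lborel)"
proof -
  define F where "F x = max 0 (artanh (x powr m) / (x * (a\<^sup>2 + (ln x)\<^sup>2)))" for x
  have F: "0 < x \<Longrightarrow> x < 1 \<Longrightarrow> F x = artanh (x powr m) / (x * (a\<^sup>2 + (ln x)\<^sup>2))" for x
    using artanh_powr_div_nonneg[OF assms] by (simp add: F_def)
  have "(\<integral>\<^sup>+x. ennreal (indicator {0<..<1} x * (artanh (x powr m) / (x * (a\<^sup>2 + (ln x)\<^sup>2)))) \<partial>lborel)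
        = (\<integral>\<^sup>+x. ennreal (indicator {0<..<1} x * F x) \<partial>lborel)"
    by (intro nn_integral_cong) (simp add: indicator_def F)
  also have "\<dots> = (\<integral>\<^sup>+t. ennreal (indicator {0<..} t * (F (exp (- t)) * exp (- t))) \<partial>lborel)"
    by (rule nn_integral_Ioo01_exp_subst) (auto simp: F_def artanh_def)
  also have "\<dots> = (\<integral>\<^sup>+t. ennreal (indicator {0<..} t * (artanh (exp (- (m * t))) / (a\<^sup>2 + t\<^sup>2))) \<partial>lborel)"
  proof (intro nn_integral_cong)
    fix t :: real
    have "F (exp (- t)) * exp (- t) = artanh (exp (- (m * t))) / (a\<^sup>2 + t\<^sup>2)" if "t > 0"
      using that by (simp add: F powr_def)
    then show "ennreal (indicator {0<..} t * (F (exp (- t)) * exp (- t)))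
               = ennreal (indicator {0<..} t * (artanh (exp (- (m * t))) / (a\<^sup>2 + t\<^sup>2)))"
      by (cases "t > 0") (simp_all add: indicator_def)
  qed
  finally show ?thesis .
qed

theorem mainTheorem7:
  fixes a m :: real
  assumes "a > 0" and "m > 0"
  shows "((\<lambda>x. artanh (x powr m) / (x * (a\<^sup>2 + (ln x)\<^sup>2))) has_integral
           (pi / (4 * a)) * ln ((a * m * (Gamma (a * m / (2 * pi)))\<^sup>2) /
                                 (2 * pi * (Gamma ((a * m + pi) / (2 * pi)))\<^sup>2)))
         {0<..<1}"
proof -
  define f where "f x = artanh (x powr m) / (x * (a\<^sup>2 + (ln x)\<^sup>2))" for x
  define b where "b = a * m / (2 * pi)"
  define R where "R = pi / (4 * a) * ln (b * Gamma b ^ 2 / Gamma (b + 1/2) ^ 2)"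
  have "b > 0"
    using assms by (simp add: b_def)
  have "(\<integral>\<^sup>+x. ennreal (indicator {0<..<1} x * f x) \<partial>lborel) = ennreal R"
    unfolding f_def R_def b_def
    using nn_integral_artanh_powr_exp_subst[OF assms] nn_integral_artanh_exp_div_quadratic[OF assms]
    by simp
  moreover have "R \<ge> 0"
    unfolding R_def using ln_Gamma_ratio_nonneg[OF \<open>b > 0\<close>] assms by simp
  moreover have "0 \<le> indicator {0<..<1} x * f x" for x
    using artanh_powr_div_nonneg[OF assms] by (simp add: indicator_def f_def)
  ultimately have "((\<lambda>x. indicator {0<..<1} x * f x) has_integral R) UNIV"
    by (intro nn_integral_has_integral) (auto simp: f_def artanh_def)
  moreover have "(\<lambda>x. indicator {0<..<1} x * f x) = (\<lambda>x. if x \<in> {0<..<1} then f x else 0)"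
    by (auto simp: indicator_def)
  ultimately have "(f has_integral R) {0<..<1}"
    by (simp only: has_integral_restrict_UNIV)
  moreover have "R = (pi / (4 * a)) * ln ((a * m * (Gamma b)\<^sup>2) / (2 * pi * (Gamma (b + 1/2))\<^sup>2))"
    unfolding R_def b_def by (simp add: field_simps)
  moreover have "(a * m + pi) / (2 * pi) = b + 1/2"
    unfolding b_def by (simp add: field_simps)
  ultimately show ?thesis
    unfolding f_def[abs_def] b_def by simp
qed

end
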